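(* Let $X$ be a finite discrete space with at least two elements, $\Gamma$ a nonempty countable set, $\varphi:\Gamma\to\Gamma$ any map. Then $(X^\Gamma,\sigma_\varphi)$ is dense distributional chaotic if and only if $\varphi$ has no periodic point.
   Context: $X^\Gamma$ has the product topology and a fixed compatible metric $d$; $\sigma_\varphi((x_\alpha)_{\alpha\in\Gamma})=(x_{\varphi(\alpha)})_{\alpha\in\Gamma}$. For $f=\sigma_\varphi$, $x,y\in X^\Gamma$, $t>0$: $\xi(x,y,t,n)=\#\{i\in\{0,\dots,n-1\}:d(f^i(x),f^i(y))<t\}$, $F_{xy}(t)=\liminf_n \xi(x,y,t,n)/n$, $F^*_{xy}(t)=\limsup_n\xi(x,y,t,n)/n$. The system is dense distributional chaotic if there exist a dense uncountable set $A\subseteq X^\Gamma$ and $\varepsilon>0$ such that for all distinct $x,y\in A$: $F^*_{xy}(s)=1$ for every $s>0$ and $F_{xy}(\varepsilon)=0$. *)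

theory Defs
  imports "HOL-Analysis.Analysis"
begin

definition sigma_phi :: "'g set \<Rightarrow> ('g \<Rightarrow> 'g) \<Rightarrow> ('g \<Rightarrow> 'a) \<Rightarrow> ('g \<Rightarrow> 'a)" where
  "sigma_phi \<Gamma> \<phi> x = restrict (\<lambda>\<alpha>. x (\<phi> \<alpha>)) \<Gamma>"

definition dc_xi :: "('b \<Rightarrow> 'b \<Rightarrow> real) \<Rightarrow> ('b \<Rightarrow> 'b) \<Rightarrow> 'b \<Rightarrow> 'b \<Rightarrow> real \<Rightarrow> nat \<Rightarrow> nat" where
  "dc_xi d f x y t n = card {i \<in> {0..<n}. d ((f ^^ i) x) ((f ^^ i) y) < t}"

definition dc_F_lower :: "('b \<Rightarrow> 'b \<Rightarrow> real) \<Rightarrow> ('b \<Rightarrow> 'b) \<Rightarrow> 'b \<Rightarrow> 'b \<Rightarrow> real \<Rightarrow> ereal" where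
  "dc_F_lower d f x y t = liminf (\<lambda>n. ereal (real (dc_xi d f x y t n) / real n))"

definition dc_F_upper :: "('b \<Rightarrow> 'b \<Rightarrow> real) \<Rightarrow> ('b \<Rightarrow> 'b) \<Rightarrow> 'b \<Rightarrow> 'b \<Rightarrow> real \<Rightarrow> ereal" where
  "dc_F_upper d f x y t = limsup (\<lambda>n. ereal (real (dc_xi d f x y t n) / real n))"

definition dense_distributional_chaotic :: "'b topology \<Rightarrow> ('b \<Rightarrow> 'b \<Rightarrow> real) \<Rightarrow> ('b \<Rightarrow> 'b) \<Rightarrow> bool" where
  "dense_distributional_chaotic T d f \<longleftrightarrow>
     (\<exists>A. A \<subseteq> topspace T \<and> T closure_of A = topspace T \<and> uncountable A \<and>
        (\<exists>\<epsilon>>0. \<forall>x\<in>A. \<forall>y\<in>A. x \<noteq> y \<longrightarrow>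
            (\<forall>s>0. dc_F_upper d f x y s = 1) \<and> dc_F_lower d f x y \<epsilon> = 0))"

end

theory Submission
  imports Defs
begin

text \<open>If \<open>\<alpha>\<close> is a periodic point of \<open>\<phi>\<close>, then at every time the \<open>\<alpha>\<close>-coordinate of the initial
  point reappears at some coordinate of the finite orbit of \<open>\<alpha>\<close>. Two points of a dense set
  that differ at \<open>\<alpha>\<close> therefore stay uniformly apart along their orbits, so \<open>F\<^sup>*\<^sub>x\<^sub>y\<close> vanishes
  for small arguments.

  Conversely, without periodic points every forward orbit of \<open>\<phi>\<close> is injective and two orbits
  that meet do so with a constant time lag. Along the orbit of one coordinate \<open>\<gamma>\<^sub>0\<close> we write a
  two-valued sequence in blocks \<open>[k!, (k+1)!)\<close>: even blocks are constant, odd blocks store the bits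
  of a parameter \<open>s \<in> 2\<^sup>\<nat>\<close>, each bit infinitely often. Since \<open>k!\<close> is negligible against
  \<open>(k+1)!\<close>, points with different parameters agree on any finite set of coordinates during almost
  all of a long even block, and disagree at \<open>\<gamma>\<^sub>0\<close> during almost all of a suitable odd block.
  Modifying these points on finitely many coordinates, chosen through an enumeration of all
  cylinders, gives a dense uncountable scrambled set.\<close>

section \<open>Densities of sets of times\<close>

lemma card_filter_ge_of_interval:
  assumes "\<And>i. L \<le> i \<Longrightarrow> i < n \<Longrightarrow> P i"
  shows "real n - real L \<le> real (card {i \<in> {0..<n}. P i})"
proof -
  have "{L..<n} \<subseteq> {i \<in> {0..<n}. P i}" using assms by auto
  then have "card {L..<n} \<le> card {i \<in> {0..<n}. P i}" by (intro card_mono) auto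
  then show ?thesis by simp
qed

lemma card_filter_le_of_interval:
  assumes "\<And>i. L \<le> i \<Longrightarrow> i < n \<Longrightarrow> \<not> P i"
  shows "card {i \<in> {0..<n}. P i} \<le> L"
proof -
  have "{i \<in> {0..<n}. P i} \<subseteq> {0..<L}" using assms by (auto simp: not_le[symmetric])
  then have "card {i \<in> {0..<n}. P i} \<le> card {0..<L}" by (intro card_mono) auto
  then show ?thesis by simp
qed

lemma limsup_card_ratio_eq_1:
  assumes "\<And>e N. e > 0 \<Longrightarrow>
    \<exists>L n. N \<le> n \<and> real L \<le> e * real n \<and> (\<forall>i. L \<le> i \<longrightarrow> i < n \<longrightarrow> P i)"
  shows "limsup (\<lambda>n. ereal (real (card {i \<in> {0..<n}. P i}) / real n)) = 1"
proof -
  define r where "r n = real (card {i \<in> {0..<n}. P i}) / real n" for n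
  have r_le_1: "r n \<le> 1" for n
  proof -
    have "card {i \<in> {0..<n}. P i} \<le> card {0..<n}" by (intro card_mono) auto
    then show ?thesis by (cases "n = 0") (auto simp: r_def divide_le_eq_1)
  qed
  have r_large: "\<exists>n\<ge>N. 1 - e \<le> r n" if e: "e > 0" for e N
  proof -
    obtain L n where Ln: "max N 1 \<le> n" "real L \<le> e * real n" "\<forall>i. L \<le> i \<longrightarrow> i < n \<longrightarrow> P i"
      using assms[OF e] by blast
    have "real n - real L \<le> real (card {i \<in> {0..<n}. P i})"
      using Ln(3) by (intro card_filter_ge_of_interval) auto
    moreover have "(1 - e) * real n = real n - e * real n" by (simp add: algebra_simps)
    ultimately have "(1 - e) * real n \<le> real (card {i \<in> {0..<n}. P i})"
      using Ln(2) by linarith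
    then have "1 - e \<le> r n" using Ln(1) by (simp add: r_def le_divide_eq)
    with Ln(1) show ?thesis by auto
  qed
  have "limsup (\<lambda>n. ereal (r n)) = 1"
  proof (rule antisym)
    show "limsup (\<lambda>n. ereal (r n)) \<le> 1"
      by (rule Limsup_bounded) (simp add: r_le_1)
    show "1 \<le> limsup (\<lambda>n. ereal (r n))"
    proof (rule ccontr)
      assume "\<not> 1 \<le> limsup (\<lambda>n. ereal (r n))"
      then obtain y where y: "limsup (\<lambda>n. ereal (r n)) < ereal y" "ereal y < 1"
        using ereal_dense2[of _ 1] by (meson not_le)
      obtain N where N: "\<And>n. n \<ge> N \<Longrightarrow> r n < y"
        using Limsup_lessD[OF y(1)] unfolding eventually_sequentially by auto
      have "0 < 1 - y" using y(2) by simp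
      then obtain n where n: "n \<ge> N" "1 - (1 - y) \<le> r n" using r_large by blast
      from N[OF n(1)] n(2) show False by simp
    qed
  qed
  then show ?thesis by (simp add: r_def)
qed

lemma liminf_card_ratio_eq_0:
  assumes "\<And>e N. e > 0 \<Longrightarrow>
    \<exists>L n. N \<le> n \<and> real L \<le> e * real n \<and> (\<forall>i. L \<le> i \<longrightarrow> i < n \<longrightarrow> \<not> P i)"
  shows "liminf (\<lambda>n. ereal (real (card {i \<in> {0..<n}. P i}) / real n)) = 0"
proof -
  define r where "r n = real (card {i \<in> {0..<n}. P i}) / real n" for n
  have r_small: "\<exists>n\<ge>N. r n \<le> e" if e: "e > 0" for e N
  proof -
    obtain L n where Ln: "max N 1 \<le> n" "real L \<le> e * real n" "\<forall>i. L \<le> i \<longrightarrow> i < n \<longrightarrow> \<not> P i"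
      using assms[OF e] by blast
    have "card {i \<in> {0..<n}. P i} \<le> L"
      using Ln(3) by (intro card_filter_le_of_interval) auto
    then have "real (card {i \<in> {0..<n}. P i}) \<le> e * real n" using Ln(2) by linarith
    then have "r n \<le> e" using Ln(1) by (simp add: r_def divide_le_eq)
    with Ln(1) show ?thesis by auto
  qed
  have "liminf (\<lambda>n. ereal (r n)) = 0"
  proof (rule antisym)
    show "0 \<le> liminf (\<lambda>n. ereal (r n))"
      by (rule Liminf_bounded) (simp add: r_def)
    show "liminf (\<lambda>n. ereal (r n)) \<le> 0"
    proof (rule ccontr)
      assume "\<not> liminf (\<lambda>n. ereal (r n)) \<le> 0"
      then obtain y where y: "ereal y < liminf (\<lambda>n. ereal (r n))" "0 < ereal y"
        using ereal_dense2[of 0] by (meson not_le)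
      obtain N where N: "\<And>n. n \<ge> N \<Longrightarrow> y < r n"
        using less_LiminfD[OF y(1)] unfolding eventually_sequentially by auto
      have "0 < y" using y(2) by simp
      then obtain n where n: "n \<ge> N" "r n \<le> y" using r_small by blast
      from N[OF n(1)] n(2) show False by simp
    qed
  qed
  then show ?thesis by (simp add: r_def)
qed

section \<open>Compatible metrics on finite products of finite discrete spaces\<close>

definition cylinder :: "'g set \<Rightarrow> 'a set \<Rightarrow> 'g set \<Rightarrow> ('g \<Rightarrow> 'a) \<Rightarrow> ('g \<Rightarrow> 'a) set" where
  "cylinder \<Gamma> X F u = {v \<in> \<Gamma> \<rightarrow>\<^sub>E X. \<forall>i\<in>F. v i = u i}"

lemma openin_cylinder:
  assumes "finite F" "F \<subseteq> \<Gamma>"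
  shows "openin (product_topology (\<lambda>_. discrete_topology X) \<Gamma>) (cylinder \<Gamma> X F u)"
proof -
  define S where "S i = (if i \<in> F then {u i} \<inter> X else X)" for i
  have "cylinder \<Gamma> X F u = Pi\<^sub>E \<Gamma> S"
  proof (intro set_eqI iffI)
    fix v assume "v \<in> cylinder \<Gamma> X F u"
    then show "v \<in> Pi\<^sub>E \<Gamma> S" by (auto simp: cylinder_def S_def PiE_iff)
  next
    fix v assume v: "v \<in> Pi\<^sub>E \<Gamma> S"
    have "v i \<in> X \<and> (i \<in> F \<longrightarrow> v i = u i)" if "i \<in> \<Gamma>" for i
      using PiE_mem[OF v that] by (cases "i \<in> F") (auto simp: S_def)
    then show "v \<in> cylinder \<Gamma> X F u"
      using v assms(2) by (auto simp: cylinder_def PiE_iff)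
  qed
  moreover have "finite {i \<in> \<Gamma>. S i \<noteq> topspace (discrete_topology X)}"
    using assms(1) by (rule rev_finite_subset) (auto simp: S_def)
  ultimately show ?thesis by (simp add: openin_PiE_gen S_def)
qed

lemma openin_product_discrete_contains_cylinder:
  assumes "openin (product_topology (\<lambda>_. discrete_topology X) \<Gamma>) U" "u \<in> U"
  obtains F where "finite F" "F \<subseteq> \<Gamma>" "cylinder \<Gamma> X F u \<subseteq> U"
proof -
  obtain W where W: "finite {i \<in> \<Gamma>. W i \<noteq> topspace (discrete_topology X)}"
    "u \<in> Pi\<^sub>E \<Gamma> W" "Pi\<^sub>E \<Gamma> W \<subseteq> U"
    using assms unfolding openin_product_topology_alt by blast
  have "cylinder \<Gamma> X {i \<in> \<Gamma>. W i \<noteq> X} u \<subseteq> Pi\<^sub>E \<Gamma> W"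
    using W(2) by (auto simp: cylinder_def PiE_iff extensional_def)
  with W that show ?thesis by auto
qed

lemma compact_space_point_cover:
  assumes "compact_space T"
    and "\<And>x. x \<in> topspace T \<Longrightarrow> openin T (U x)" "\<And>x. x \<in> topspace T \<Longrightarrow> x \<in> U x"
  shows "\<exists>C. finite C \<and> C \<subseteq> topspace T \<and> topspace T \<subseteq> (\<Union>x\<in>C. U x)"
proof -
  have "compactin T (topspace T)" using assms(1) by (simp add: compact_space_def)
  moreover have "topspace T \<subseteq> \<Union> (U ` topspace T)" using assms(3) by blast
  moreover have "\<forall>V\<in>U ` topspace T. openin T V" using assms(2) by blast
  ultimately obtain \<F> where \<F>: "finite \<F>" "\<F> \<subseteq> U ` topspace T" "topspace T \<subseteq> \<Union>\<F>"
    unfolding compactin_def by meson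
  then obtain C where "finite C" "C \<subseteq> topspace T" "\<F> = U ` C"
    by (meson finite_subset_image)
  with \<F>(3) show ?thesis by blast
qed

lemma (in Metric_space) Lebesgue_number:
  assumes "compact_space mtopology"
    and "\<And>x. x \<in> M \<Longrightarrow> openin mtopology (U x)" "\<And>x. x \<in> M \<Longrightarrow> x \<in> U x"
  shows "\<exists>\<delta>>0. \<forall>x\<in>M. \<exists>y\<in>M. mball x \<delta> \<subseteq> U y"
proof -
  have "\<forall>x\<in>M. \<exists>r>0. mball x r \<subseteq> U x"
    using assms(2,3) unfolding openin_mtopology by blast
  then obtain r where r: "\<And>x. x \<in> M \<Longrightarrow> r x > 0 \<and> mball x (r x) \<subseteq> U x"
    using bchoice by meson
  have "\<exists>C. finite C \<and> C \<subseteq> M \<and> M \<subseteq> (\<Union>y\<in>C. mball y (r y / 2))"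
    using compact_space_point_cover[OF assms(1), of "\<lambda>y. mball y (r y / 2)"] r by simp
  then obtain C where C: "finite C" "C \<subseteq> M" "M \<subseteq> (\<Union>y\<in>C. mball y (r y / 2))"
    by blast
  define \<delta> where "\<delta> = Min (insert 1 ((\<lambda>y. r y / 2) ` C))"
  have "\<delta> > 0" unfolding \<delta>_def using C r by (subst Min_gr_iff) auto
  moreover have "\<exists>y\<in>M. mball x \<delta> \<subseteq> U y" if x: "x \<in> M" for x
  proof -
    obtain y where y: "y \<in> C" "x \<in> mball y (r y / 2)" using C x by blast
    have "\<delta> \<le> r y / 2" unfolding \<delta>_def using C y by (intro Min_le) auto
    have "mball x \<delta> \<subseteq> mball y (r y)"
    proof
      fix t assume "t \<in> mball x \<delta>"
      moreover have "d y t \<le> d y x + d x t" if "t \<in> M" using triangle y C x that by blast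
      ultimately show "t \<in> mball y (r y)" using y(2) \<open>\<delta> \<le> r y / 2\<close> by auto
    qed
    with r y C show ?thesis by blast
  qed
  ultimately show ?thesis by blast
qed

locale discrete_product_metric = Metric_space "\<Gamma> \<rightarrow>\<^sub>E X" d
  for \<Gamma> :: "'g set" and X :: "'a set" and d +
  assumes finite_X: "finite X"
    and mtopology_eq: "mtopology = product_topology (\<lambda>_. discrete_topology X) \<Gamma>"
begin

lemma compact_space_mtopology: "compact_space mtopology"
  by (simp add: mtopology_eq compact_space_product_topology compact_space_discrete_topology finite_X)

lemma dist_less_imp_agree:
  assumes "finite F" "F \<subseteq> \<Gamma>"
  obtains \<delta> where "\<delta> > 0"
    "\<And>u v. u \<in> \<Gamma> \<rightarrow>\<^sub>E X \<Longrightarrow> v \<in> \<Gamma> \<rightarrow>\<^sub>E X \<Longrightarrow> d u v < \<delta> \<Longrightarrow> \<forall>i\<in>F. u i = v i"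
proof -
  have "openin mtopology (cylinder \<Gamma> X F u)" for u
    using openin_cylinder[OF assms] by (simp add: mtopology_eq)
  moreover have "u \<in> cylinder \<Gamma> X F u" if "u \<in> \<Gamma> \<rightarrow>\<^sub>E X" for u
    using that by (simp add: cylinder_def)
  ultimately have "\<exists>\<delta>>0. \<forall>u\<in>\<Gamma> \<rightarrow>\<^sub>E X. \<exists>w\<in>\<Gamma> \<rightarrow>\<^sub>E X. mball u \<delta> \<subseteq> cylinder \<Gamma> X F w"
    by (intro Lebesgue_number compact_space_mtopology)
  then obtain \<delta> where "\<delta> > 0"
    and \<delta>: "\<And>u. u \<in> \<Gamma> \<rightarrow>\<^sub>E X \<Longrightarrow> \<exists>w\<in>\<Gamma> \<rightarrow>\<^sub>E X. mball u \<delta> \<subseteq> cylinder \<Gamma> X F w"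
    by blast
  have agree: "\<forall>i\<in>F. u i = v i"
    if uv: "u \<in> \<Gamma> \<rightarrow>\<^sub>E X" "v \<in> \<Gamma> \<rightarrow>\<^sub>E X" "d u v < \<delta>" for u v
  proof -
    obtain w where "mball u \<delta> \<subseteq> cylinder \<Gamma> X F w" using \<delta> uv(1) by blast
    moreover have "u \<in> mball u \<delta>" "v \<in> mball u \<delta>" using uv \<open>\<delta> > 0\<close> by auto
    ultimately have "u \<in> cylinder \<Gamma> X F w" "v \<in> cylinder \<Gamma> X F w" by blast+
    then show ?thesis by (simp add: cylinder_def)
  qed
  show ?thesis by (rule that[OF \<open>\<delta> > 0\<close> agree])
qed

lemma agree_imp_dist_less:
  assumes "s > 0"
  obtains F where "finite F" "F \<subseteq> \<Gamma>"
    "\<And>u v. u \<in> \<Gamma> \<rightarrow>\<^sub>E X \<Longrightarrow> v \<in> \<Gamma> \<rightarrow>\<^sub>E X \<Longrightarrow> \<forall>i\<in>F. u i = v i \<Longrightarrow> d u v < s"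
proof -
  have "\<forall>u\<in>\<Gamma> \<rightarrow>\<^sub>E X. \<exists>F. finite F \<and> F \<subseteq> \<Gamma> \<and> cylinder \<Gamma> X F u \<subseteq> mball u (s/2)"
  proof
    fix u assume "u \<in> \<Gamma> \<rightarrow>\<^sub>E X"
    then have "u \<in> mball u (s/2)" using assms by simp
    moreover have "openin (product_topology (\<lambda>_. discrete_topology X) \<Gamma>) (mball u (s/2))"
      by (metis openin_mball mtopology_eq)
    ultimately obtain F where "finite F" "F \<subseteq> \<Gamma>" "cylinder \<Gamma> X F u \<subseteq> mball u (s/2)"
      by (metis openin_product_discrete_contains_cylinder)
    then show "\<exists>F. finite F \<and> F \<subseteq> \<Gamma> \<and> cylinder \<Gamma> X F u \<subseteq> mball u (s/2)" by blast
  qed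
  from this[THEN bchoice] obtain Fc where Fc: "\<forall>u\<in>\<Gamma> \<rightarrow>\<^sub>E X.
      finite (Fc u) \<and> Fc u \<subseteq> \<Gamma> \<and> cylinder \<Gamma> X (Fc u) u \<subseteq> mball u (s/2)"
    by blast
  have "openin mtopology (cylinder \<Gamma> X (Fc u) u)" if "u \<in> \<Gamma> \<rightarrow>\<^sub>E X" for u
    using Fc that by (simp add: mtopology_eq openin_cylinder)
  moreover have "u \<in> cylinder \<Gamma> X (Fc u) u" if "u \<in> \<Gamma> \<rightarrow>\<^sub>E X" for u
    using that by (simp add: cylinder_def)
  ultimately have "\<exists>C. finite C \<and> C \<subseteq> \<Gamma> \<rightarrow>\<^sub>E X \<and>
      \<Gamma> \<rightarrow>\<^sub>E X \<subseteq> (\<Union>u\<in>C. cylinder \<Gamma> X (Fc u) u)"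
    using compact_space_point_cover[OF compact_space_mtopology, of "\<lambda>u. cylinder \<Gamma> X (Fc u) u"]
    by simp
  then obtain C where C: "finite C" "C \<subseteq> \<Gamma> \<rightarrow>\<^sub>E X"
    "\<Gamma> \<rightarrow>\<^sub>E X \<subseteq> (\<Union>u\<in>C. cylinder \<Gamma> X (Fc u) u)"
    by blast
  have close: "d v w < s" if vw: "v \<in> \<Gamma> \<rightarrow>\<^sub>E X" "w \<in> \<Gamma> \<rightarrow>\<^sub>E X" "\<forall>i\<in>\<Union>(Fc ` C). v i = w i" for v w
  proof -
    obtain u where u: "u \<in> C" "v \<in> cylinder \<Gamma> X (Fc u) u" using C vw(1) by blast
    then have "w \<in> cylinder \<Gamma> X (Fc u) u" using vw by (auto simp: cylinder_def)
    with u have "v \<in> mball u (s/2)" "w \<in> mball u (s/2)" using Fc C(2) by blast+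
    moreover have "d v w \<le> d v u + d u w" using triangle vw u C(2) by blast
    ultimately show ?thesis using commute[of u v] by simp
  qed
  have "finite (\<Union>(Fc ` C))" "\<Union>(Fc ` C) \<subseteq> \<Gamma>" using C Fc by blast+
  with close show ?thesis by (intro that)
qed

end

section \<open>Iterates of \<open>\<sigma>\<^sub>\<phi>\<close> and periodic points\<close>

lemma two_distinct_elements:
  assumes "card X \<ge> 2"
  obtains a b where "a \<in> X" "b \<in> X" "a \<noteq> b"
proof -
  obtain a B where aB: "X = insert a B" "a \<notin> B" "1 \<le> card B"
    using assms card_le_Suc_iff[of 1 X] by auto
  then obtain b where "b \<in> B" by (metis card.empty equals0I not_one_le_zero)
  with aB show ?thesis by (intro that[of a b]) auto
qed

lemma funpow_in_funcset: "\<phi> \<in> \<Gamma> \<rightarrow> \<Gamma> \<Longrightarrow> \<beta> \<in> \<Gamma> \<Longrightarrow> (\<phi> ^^ n) \<beta> \<in> \<Gamma>"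
  by (induction n) auto

lemma funpow_mult_fixpoint: "(f ^^ n) a = a \<Longrightarrow> (f ^^ (n * k)) a = a"
  by (induction k) (simp_all add: funpow_add)

lemma funpow_sigma_phi:
  assumes "\<phi> \<in> \<Gamma> \<rightarrow> \<Gamma>" "x \<in> \<Gamma> \<rightarrow>\<^sub>E X"
  shows "(sigma_phi \<Gamma> \<phi> ^^ n) x = restrict (\<lambda>\<beta>. x ((\<phi> ^^ n) \<beta>)) \<Gamma>"
proof (induction n)
  case 0
  then show ?case using assms(2) by (simp add: PiE_restrict)
next
  case (Suc n)
  have "(sigma_phi \<Gamma> \<phi> ^^ Suc n) x = sigma_phi \<Gamma> \<phi> ((sigma_phi \<Gamma> \<phi> ^^ n) x)" by simp
  also have "\<dots> = restrict (\<lambda>\<beta>. x ((\<phi> ^^ Suc n) \<beta>)) \<Gamma>"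
    unfolding Suc sigma_phi_def using assms(1)
    by (intro restrict_ext) (auto simp: funpow_Suc_right simp del: funpow.simps)
  finally show ?case .
qed

lemma funpow_sigma_phi_in:
  assumes "\<phi> \<in> \<Gamma> \<rightarrow> \<Gamma>" "x \<in> \<Gamma> \<rightarrow>\<^sub>E X"
  shows "(sigma_phi \<Gamma> \<phi> ^^ n) x \<in> \<Gamma> \<rightarrow>\<^sub>E X"
  using assms funpow_in_funcset[OF assms(1)] by (auto simp: funpow_sigma_phi PiE_iff)

context discrete_product_metric
begin

lemma periodic_point_separates:
  assumes "\<phi> \<in> \<Gamma> \<rightarrow> \<Gamma>" "\<alpha> \<in> \<Gamma>" "n > 0" "(\<phi> ^^ n) \<alpha> = \<alpha>"
  obtains \<delta> where "\<delta> > 0"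
    "\<And>x y i. x \<in> \<Gamma> \<rightarrow>\<^sub>E X \<Longrightarrow> y \<in> \<Gamma> \<rightarrow>\<^sub>E X \<Longrightarrow> x \<alpha> \<noteq> y \<alpha> \<Longrightarrow>
       \<delta> \<le> d ((sigma_phi \<Gamma> \<phi> ^^ i) x) ((sigma_phi \<Gamma> \<phi> ^^ i) y)"
proof -
  define orbit where "orbit = (\<lambda>j. (\<phi> ^^ j) \<alpha>) ` {..n}"
  have "finite orbit" "orbit \<subseteq> \<Gamma>"
    using funpow_in_funcset[OF assms(1,2)] by (auto simp: orbit_def)
  obtain \<delta> where "\<delta> > 0" and \<delta>: "\<And>u v. u \<in> \<Gamma> \<rightarrow>\<^sub>E X \<Longrightarrow> v \<in> \<Gamma> \<rightarrow>\<^sub>E X \<Longrightarrow>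
      d u v < \<delta> \<Longrightarrow> \<forall>i\<in>orbit. u i = v i"
    using dist_less_imp_agree[OF \<open>finite orbit\<close> \<open>orbit \<subseteq> \<Gamma>\<close>] by blast
  have far: "\<delta> \<le> d ((sigma_phi \<Gamma> \<phi> ^^ i) x) ((sigma_phi \<Gamma> \<phi> ^^ i) y)"
    if xy: "x \<in> \<Gamma> \<rightarrow>\<^sub>E X" "y \<in> \<Gamma> \<rightarrow>\<^sub>E X" "x \<alpha> \<noteq> y \<alpha>" for x y i
  proof (rule ccontr)
    assume "\<not> ?thesis"
    then have agree: "\<forall>\<beta>\<in>orbit. (sigma_phi \<Gamma> \<phi> ^^ i) x \<beta> = (sigma_phi \<Gamma> \<phi> ^^ i) y \<beta>"
      using \<delta>[OF funpow_sigma_phi_in[OF assms(1) xy(1)] funpow_sigma_phi_in[OF assms(1) xy(2)]]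
      by simp
    define j where "j = n - i mod n"
    \<comment> \<open>\<open>i + j\<close> is a multiple of the period, so \<open>\<sigma>\<^sup>i x\<close> has \<open>x \<alpha>\<close> at the coordinate \<open>\<phi>\<^sup>j \<alpha>\<close>\<close>
    have "n * (i div n) + i mod n = i" "i mod n < n"
      using assms(3) by simp_all
    then have "i + j = n * (i div n) + n" unfolding j_def by linarith
    then have "i + j = n * (i div n + 1)" by simp
    then have "(\<phi> ^^ i) ((\<phi> ^^ j) \<alpha>) = \<alpha>"
      using funpow_mult_fixpoint[OF assms(4)] by (metis comp_apply funpow_add)
    moreover have "(\<phi> ^^ j) \<alpha> \<in> orbit" by (auto simp: orbit_def j_def)
    moreover have "(\<phi> ^^ j) \<alpha> \<in> \<Gamma>" using funpow_in_funcset[OF assms(1,2)] .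
    ultimately have "x \<alpha> = y \<alpha>"
      using agree xy by (force simp: funpow_sigma_phi[OF assms(1)])
    with xy(3) show False ..
  qed
  show ?thesis by (rule that[OF \<open>\<delta> > 0\<close> far])
qed

lemma not_dense_distributional_chaotic_if_periodic_point:
  assumes "card X \<ge> 2" "\<phi> \<in> \<Gamma> \<rightarrow> \<Gamma>" "\<alpha> \<in> \<Gamma>" "n > 0" "(\<phi> ^^ n) \<alpha> = \<alpha>"
  shows "\<not> dense_distributional_chaotic (product_topology (\<lambda>_. discrete_topology X) \<Gamma>) d (sigma_phi \<Gamma> \<phi>)"
proof
  let ?T = "product_topology (\<lambda>_. discrete_topology X) \<Gamma>"
  assume "dense_distributional_chaotic ?T d (sigma_phi \<Gamma> \<phi>)"
  then obtain A where A: "A \<subseteq> \<Gamma> \<rightarrow>\<^sub>E X" "?T closure_of A = topspace ?T"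
    and scrambled: "\<And>x y s. x \<in> A \<Longrightarrow> y \<in> A \<Longrightarrow> x \<noteq> y \<Longrightarrow> s > 0 \<Longrightarrow>
      dc_F_upper d (sigma_phi \<Gamma> \<phi>) x y s = 1"
    unfolding dense_distributional_chaotic_def by auto
  have hit: "\<exists>x\<in>A. x \<alpha> = c" if "c \<in> X" for c
  proof -
    have "openin ?T (cylinder \<Gamma> X {\<alpha>} (\<lambda>_. c))"
      using assms(3) by (intro openin_cylinder) auto
    moreover have "restrict (\<lambda>_. c) \<Gamma> \<in> cylinder \<Gamma> X {\<alpha>} (\<lambda>_. c)"
      using that assms(3) by (simp add: cylinder_def)
    ultimately have "A \<inter> cylinder \<Gamma> X {\<alpha>} (\<lambda>_. c) \<noteq> {}"
      using A(2) unfolding dense_intersects_open by blast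
    then show ?thesis by (auto simp: cylinder_def)
  qed
  obtain a b where "a \<in> X" "b \<in> X" "a \<noteq> b" using two_distinct_elements[OF assms(1)] .
  then obtain x y where xy: "x \<in> A" "y \<in> A" "x \<alpha> \<noteq> y \<alpha>" using hit by metis
  obtain \<delta> where "\<delta> > 0" and far: "\<And>i. \<delta> \<le> d ((sigma_phi \<Gamma> \<phi> ^^ i) x) ((sigma_phi \<Gamma> \<phi> ^^ i) y)"
    using periodic_point_separates[OF assms(2-5)] xy A(1) by (metis subsetD)
  have "dc_xi d (sigma_phi \<Gamma> \<phi>) x y \<delta> m = 0" for m
    using far by (simp add: dc_xi_def not_less)
  then have "dc_F_upper d (sigma_phi \<Gamma> \<phi>) x y \<delta> = 0"
    by (simp add: dc_F_upper_def Limsup_const)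
  with scrambled[OF xy(1,2) _ \<open>\<delta> > 0\<close>] xy(3) show False by auto
qed

end

section \<open>Orbits of a map without periodic points\<close>

locale aperiodic_map =
  fixes \<Gamma> :: "'g set" and \<phi> :: "'g \<Rightarrow> 'g"
  assumes maps_to: "\<phi> \<in> \<Gamma> \<rightarrow> \<Gamma>"
    and no_periodic_point: "\<not> (\<exists>\<alpha>\<in>\<Gamma>. \<exists>n>0. (\<phi> ^^ n) \<alpha> = \<alpha>)"
begin

lemma funpow_eq_imp_eq:
  assumes "\<alpha> \<in> \<Gamma>" "(\<phi> ^^ i) \<alpha> = (\<phi> ^^ j) \<alpha>"
  shows "i = j"
proof (rule ccontr)
  have False if "i < j" "(\<phi> ^^ i) \<alpha> = (\<phi> ^^ j) \<alpha>" for i j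
  proof -
    have "(\<phi> ^^ (j - i)) ((\<phi> ^^ i) \<alpha>) = (\<phi> ^^ (j - i + i)) \<alpha>"
      by (simp add: funpow_add)
    also have "\<dots> = (\<phi> ^^ i) \<alpha>" using that by simp
    finally have "(\<phi> ^^ (j - i)) ((\<phi> ^^ i) \<alpha>) = (\<phi> ^^ i) \<alpha>" .
    moreover have "(\<phi> ^^ i) \<alpha> \<in> \<Gamma>" using funpow_in_funcset[OF maps_to assms(1)] .
    moreover have "j - i > 0" using that by simp
    ultimately show False using no_periodic_point by blast
  qed
  moreover assume "i \<noteq> j"
  ultimately show False using assms(2) by (metis linorder_neq_iff)
qed

lemma orbit_lag_constant:
  assumes "\<alpha> \<in> \<Gamma>" "\<gamma> \<in> \<Gamma>" "(\<phi> ^^ i0) \<alpha> = (\<phi> ^^ j0) \<gamma>" "(\<phi> ^^ i) \<alpha> = (\<phi> ^^ j) \<gamma>"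
  shows "j + i0 = i + j0"
proof -
  have "(\<phi> ^^ (i + j0)) \<gamma> = (\<phi> ^^ i) ((\<phi> ^^ i0) \<alpha>)" using assms(3) by (simp add: funpow_add)
  also have "\<dots> = (\<phi> ^^ (i0 + i)) \<alpha>" by (simp add: funpow_add add.commute)
  also have "\<dots> = (\<phi> ^^ i0) ((\<phi> ^^ j) \<gamma>)" using assms(4) by (simp add: funpow_add)
  also have "\<dots> = (\<phi> ^^ (j + i0)) \<gamma>" by (simp add: funpow_add add.commute)
  finally show ?thesis using funpow_eq_imp_eq[OF assms(2)] by simp
qed

lemma finite_orbit_visits:
  assumes "\<beta> \<in> \<Gamma>" "finite G"
  shows "finite {i. (\<phi> ^^ i) \<beta> \<in> G}"
proof -
  have "finite {i. (\<phi> ^^ i) \<beta> = g}" for g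
  proof (cases "\<exists>i0. (\<phi> ^^ i0) \<beta> = g")
    case True
    then obtain i0 where "(\<phi> ^^ i0) \<beta> = g" by blast
    then have "{i. (\<phi> ^^ i) \<beta> = g} \<subseteq> {i0}" using funpow_eq_imp_eq[OF assms(1)] by auto
    then show ?thesis using finite_subset by blast
  qed simp
  moreover have "{i. (\<phi> ^^ i) \<beta> \<in> G} = (\<Union>g\<in>G. {i. (\<phi> ^^ i) \<beta> = g})" by auto
  ultimately show ?thesis using assms(2) by simp
qed

lemma eventually_orbits_avoid:
  assumes "finite F" "F \<subseteq> \<Gamma>" "finite G"
  shows "\<exists>K. \<forall>i\<ge>K. \<forall>\<beta>\<in>F. (\<phi> ^^ i) \<beta> \<notin> G"
proof -
  have "finite (\<Union>\<beta>\<in>F. {i. (\<phi> ^^ i) \<beta> \<in> G})"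
    using assms finite_orbit_visits by blast
  then obtain K where "\<forall>i\<in>(\<Union>\<beta>\<in>F. {i. (\<phi> ^^ i) \<beta> \<in> G}). i < K"
    using finite_nat_set_iff_bounded by blast
  then show ?thesis by (meson UN_I leD mem_Collect_eq)
qed

lemma orbit_lag_bounded:
  assumes "finite F" "F \<subseteq> \<Gamma>" "\<gamma> \<in> \<Gamma>"
  shows "\<exists>C. \<forall>\<beta>\<in>F. \<forall>i j. (\<phi> ^^ i) \<beta> = (\<phi> ^^ j) \<gamma> \<longrightarrow> i \<le> j + C \<and> j \<le> i + C"
proof -
  have "\<forall>\<beta>\<in>F. \<exists>c. \<forall>i j. (\<phi> ^^ i) \<beta> = (\<phi> ^^ j) \<gamma> \<longrightarrow> i \<le> j + c \<and> j \<le> i + c"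
  proof
    fix \<beta> assume "\<beta> \<in> F"
    show "\<exists>c. \<forall>i j. (\<phi> ^^ i) \<beta> = (\<phi> ^^ j) \<gamma> \<longrightarrow> i \<le> j + c \<and> j \<le> i + c"
    proof (cases "\<exists>i0 j0. (\<phi> ^^ i0) \<beta> = (\<phi> ^^ j0) \<gamma>")
    case True
    then obtain i0 j0 where meet: "(\<phi> ^^ i0) \<beta> = (\<phi> ^^ j0) \<gamma>" by blast
    have "i \<le> j + (i0 + j0) \<and> j \<le> i + (i0 + j0)" if "(\<phi> ^^ i) \<beta> = (\<phi> ^^ j) \<gamma>" for i j
      using orbit_lag_constant[OF _ assms(3) meet that] \<open>\<beta> \<in> F\<close> assms(2) by force
    then show ?thesis by blast
  qed auto
  qed
  from this[THEN bchoice] obtain c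
    where c: "\<forall>\<beta>\<in>F. \<forall>i j. (\<phi> ^^ i) \<beta> = (\<phi> ^^ j) \<gamma> \<longrightarrow> i \<le> j + c \<beta> \<and> j \<le> i + c \<beta>"
    by blast
  have "c \<beta> \<le> sum c F" if "\<beta> \<in> F" for \<beta> using that assms(1) by (intro member_le_sum) auto
  with c show ?thesis by (intro exI[of _ "sum c F"]) fastforce
qed

end

section \<open>Coding parameters into factorial blocks\<close>

lemma fact_blocks_disjoint:
  fixes j :: nat
  assumes "j \<in> {fact k..<fact (Suc k)}" "j \<in> {fact k'..<fact (Suc k')}"
  shows "k = k'"
proof (rule ccontr)
  assume "k \<noteq> k'"
  then consider "Suc k \<le> k'" | "Suc k' \<le> k" by linarith
  then show False
  proof cases
    case 1
    then have "(fact (Suc k) :: nat) \<le> fact k'" by (rule fact_mono)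
    with assms show False by simp
  next
    case 2
    then have "(fact (Suc k') :: nat) \<le> fact k" by (rule fact_mono)
    with assms show False by simp
  qed
qed

lemma fact_Suc_dominates:
  fixes M N :: nat and e :: real
  assumes "e > 0"
  shows "\<exists>K. \<forall>k\<ge>K. real (fact k) + M \<le> e * (real (fact (Suc k)) - M) \<and> N + M \<le> (fact (Suc k) :: nat)"
proof -
  define K where "K = nat \<lceil>(1 + M + e * M) / e\<rceil> + N + M"
  have "real (fact k) + M \<le> e * (real (fact (Suc k)) - M) \<and> N + M \<le> (fact (Suc k) :: nat)"
    if "k \<ge> K" for k
  proof
    have "real k \<ge> (1 + M + e * M) / e" using that unfolding K_def by linarith
    then have "e * real k \<ge> 1 + M + e * M" using assms by (simp add: divide_le_eq mult.commute)
    then have ek: "e * (real k + 1) \<ge> 1 + M + e * M" using assms by (simp add: algebra_simps)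
    define f where "f = real (fact k)"
    have f1: "f \<ge> 1" unfolding f_def by simp
    have "M * f \<ge> M" using f1 by (simp add: mult_le_cancel_left1)
    moreover have "e * M * f \<ge> e * M" using mult_left_mono[OF f1, of "e * M"] assms by simp
    ultimately have "f + M \<le> (1 + M + e * M) * f - e * M" by (simp add: algebra_simps)
    also have "\<dots> \<le> e * (real k + 1) * f - e * M"
      using mult_right_mono[OF ek, of f] f1 by linarith
    also have "\<dots> = e * (real (fact (Suc k)) - M)"
      unfolding f_def by (simp add: algebra_simps)
    finally show "real (fact k) + M \<le> e * (real (fact (Suc k)) - M)" unfolding f_def .
    have "N + M \<le> Suc k" using that unfolding K_def by simp
    also have "Suc k \<le> fact (Suc k)" by (rule fact_ge_self)
    finally show "N + M \<le> (fact (Suc k) :: nat)" .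
  qed
  then show ?thesis by blast
qed

text \<open>Block \<open>2q+1\<close> stores the bit \<open>s m\<close> with \<open>m = fst (prod_decode q)\<close>, so every bit of \<open>s\<close>
  is stored in infinitely many blocks; the even blocks store nothing.\<close>

definition coded_bit :: "(nat \<Rightarrow> bool) \<Rightarrow> nat \<Rightarrow> bool" where
  "coded_bit s j \<longleftrightarrow> (\<exists>q. j \<in> {fact (2*q+1)..<fact (Suc (2*q+1))} \<and> s (fst (prod_decode q)))"

lemma not_coded_bit_even_block:
  assumes "j \<in> {fact (2*q)..<fact (Suc (2*q))}"
  shows "\<not> coded_bit s j"
proof
  assume "coded_bit s j"
  then obtain q' where "j \<in> {fact (2*q'+1)..<fact (Suc (2*q'+1))}" unfolding coded_bit_def by blast
  with assms have "2*q = 2*q'+1" by (rule fact_blocks_disjoint)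
  then show False by presburger
qed

lemma coded_bit_odd_block:
  assumes "j \<in> {fact (2*q+1)..<fact (Suc (2*q+1))}"
  shows "coded_bit s j \<longleftrightarrow> s (fst (prod_decode q))"
proof
  assume "coded_bit s j"
  then obtain q' where "j \<in> {fact (2*q'+1)..<fact (Suc (2*q'+1))}" "s (fst (prod_decode q'))"
    unfolding coded_bit_def by blast
  moreover from this(1) assms have "2*q'+1 = 2*q+1" by (rule fact_blocks_disjoint)
  ultimately show "s (fst (prod_decode q))" by simp
qed (use assms in \<open>auto simp: coded_bit_def\<close>)

locale orbit_coding = aperiodic_map \<Gamma> \<phi> for \<Gamma> :: "'g set" and \<phi> +
  fixes \<gamma>0 :: 'g and a b :: 'a
  assumes \<gamma>0_in: "\<gamma>0 \<in> \<Gamma>"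
begin

definition coded_point :: "(nat \<Rightarrow> bool) \<Rightarrow> 'g \<Rightarrow> 'a" where
  "coded_point s = restrict (\<lambda>\<beta>. if \<exists>j. (\<phi> ^^ j) \<gamma>0 = \<beta> \<and> coded_bit s j then b else a) \<Gamma>"

lemma coded_point_in: "a \<in> X \<Longrightarrow> b \<in> X \<Longrightarrow> coded_point s \<in> \<Gamma> \<rightarrow>\<^sub>E X"
  by (simp add: coded_point_def)

lemma coded_point_orbit: "coded_point s ((\<phi> ^^ j) \<gamma>0) = (if coded_bit s j then b else a)"
proof -
  have "(\<phi> ^^ j) \<gamma>0 \<in> \<Gamma>" using funpow_in_funcset[OF maps_to \<gamma>0_in] .
  moreover have "(\<phi> ^^ j') \<gamma>0 = (\<phi> ^^ j) \<gamma>0 \<longleftrightarrow> j' = j" for j'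
    using funpow_eq_imp_eq[OF \<gamma>0_in] by blast
  ultimately show ?thesis by (auto simp: coded_point_def)
qed

lemma coded_point_off_orbit:
  "\<beta> \<in> \<Gamma> \<Longrightarrow> (\<And>j. (\<phi> ^^ j) \<gamma>0 \<noteq> \<beta>) \<Longrightarrow> coded_point s \<beta> = a"
  by (simp add: coded_point_def)

lemma coded_point_even_blocks:
  assumes "finite F" "F \<subseteq> \<Gamma>"
  shows "\<exists>C. \<forall>s k i. \<forall>\<beta>\<in>F. fact (2*k) + C \<le> i \<longrightarrow> i + C < fact (Suc (2*k)) \<longrightarrow>
    coded_point s ((\<phi> ^^ i) \<beta>) = a"
proof -
  obtain C where C: "\<forall>\<beta>\<in>F. \<forall>i j. (\<phi> ^^ i) \<beta> = (\<phi> ^^ j) \<gamma>0 \<longrightarrow> i \<le> j + C \<and> j \<le> i + C"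
    using orbit_lag_bounded[OF assms \<gamma>0_in] by blast
  have "coded_point s ((\<phi> ^^ i) \<beta>) = a"
    if \<beta>: "\<beta> \<in> F" and i: "fact (2*k) + C \<le> i" "i + C < fact (Suc (2*k))" for s k i \<beta>
  proof (cases "\<exists>j. (\<phi> ^^ j) \<gamma>0 = (\<phi> ^^ i) \<beta>")
    case True
    then obtain j where j: "(\<phi> ^^ j) \<gamma>0 = (\<phi> ^^ i) \<beta>" by blast
    then have "i \<le> j + C" "j \<le> i + C" using C \<beta> by metis+
    then have "j \<in> {fact (2*k)..<fact (Suc (2*k))}" using i by simp
    then have "\<not> coded_bit s j" by (rule not_coded_bit_even_block)
    then show ?thesis using coded_point_orbit[of s j] j by simp
  next
    case False
    moreover have "(\<phi> ^^ i) \<beta> \<in> \<Gamma>" using funpow_in_funcset[OF maps_to] \<beta> assms(2) by blast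
    ultimately show ?thesis by (simp add: coded_point_off_orbit)
  qed
  then show ?thesis by blast
qed

lemma agree_on_long_intervals:
  assumes "finite F" "F \<subseteq> \<Gamma>" "finite G"
    and x: "\<And>\<beta>. \<beta> \<in> \<Gamma> - G \<Longrightarrow> x \<beta> = coded_point s \<beta>"
    and y: "\<And>\<beta>. \<beta> \<in> \<Gamma> - G \<Longrightarrow> y \<beta> = coded_point s' \<beta>"
    and "e > 0"
  shows "\<exists>L n. N \<le> n \<and> real L \<le> e * real n \<and>
    (\<forall>i. L \<le> i \<longrightarrow> i < n \<longrightarrow> (\<forall>\<beta>\<in>F. x ((\<phi> ^^ i) \<beta>) = y ((\<phi> ^^ i) \<beta>)))"
proof -
  obtain K where K: "\<forall>i\<ge>K. \<forall>\<beta>\<in>F. (\<phi> ^^ i) \<beta> \<notin> G"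
    using eventually_orbits_avoid[OF assms(1-3)] by blast
  obtain C where C: "\<forall>s k i. \<forall>\<beta>\<in>F. fact (2*k) + C \<le> i \<longrightarrow> i + C < fact (Suc (2*k)) \<longrightarrow>
      coded_point s ((\<phi> ^^ i) \<beta>) = a"
    using coded_point_even_blocks[OF assms(1,2)] by blast
  define M where "M = C + K"
  obtain k0 where k0: "\<forall>k\<ge>k0. real (fact k) + M \<le> e * (real (fact (Suc k)) - M) \<and> N + M \<le> (fact (Suc k) :: nat)"
    using fact_Suc_dominates[OF \<open>e > 0\<close>] by blast
  define k where "k = 2 * k0"
  define L where "L = (fact k :: nat) + M"
  define n where "n = (fact (Suc k) :: nat) - M"
  have "k0 \<le> k" by (simp add: k_def)
  then have growth: "real (fact k) + M \<le> e * (real (fact (Suc k)) - M)" "N + M \<le> (fact (Suc k) :: nat)"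
    using k0 by blast+
  have "x ((\<phi> ^^ i) \<beta>) = y ((\<phi> ^^ i) \<beta>)" if i: "L \<le> i" "i < n" and \<beta>: "\<beta> \<in> F" for i \<beta>
  proof -
    have "(\<phi> ^^ i) \<beta> \<in> \<Gamma> - G"
      using K funpow_in_funcset[OF maps_to] \<beta> assms(2) i(1) by (auto simp: L_def M_def)
    moreover have "fact (2*k0) + C \<le> i" "i + C < fact (Suc (2*k0))"
      using i growth(2) by (simp_all add: L_def n_def M_def k_def)
    ultimately show ?thesis using x y C \<beta> by simp
  qed
  moreover have "real L \<le> e * real n" "N \<le> n"
    using growth by (simp_all add: L_def n_def of_nat_diff)
  ultimately show ?thesis by blast
qed

lemma differ_on_long_intervals:
  assumes "finite G"
    and x: "\<And>\<beta>. \<beta> \<in> \<Gamma> - G \<Longrightarrow> x \<beta> = coded_point s \<beta>"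
    and y: "\<And>\<beta>. \<beta> \<in> \<Gamma> - G \<Longrightarrow> y \<beta> = coded_point s' \<beta>"
    and "s m \<noteq> s' m" "a \<noteq> b" "e > 0"
  shows "\<exists>L n. N \<le> n \<and> real L \<le> e * real n \<and>
    (\<forall>i. L \<le> i \<longrightarrow> i < n \<longrightarrow> x ((\<phi> ^^ i) \<gamma>0) \<noteq> y ((\<phi> ^^ i) \<gamma>0))"
proof -
  obtain K where K: "\<forall>i\<ge>K. \<forall>\<beta>\<in>{\<gamma>0}. (\<phi> ^^ i) \<beta> \<notin> G"
    using eventually_orbits_avoid[of "{\<gamma>0}" G] \<gamma>0_in assms(1) by blast
  obtain k0 where k0: "\<forall>k\<ge>k0. real (fact k) + K \<le> e * (real (fact (Suc k)) - K) \<and> N + K \<le> (fact (Suc k) :: nat)"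
    using fact_Suc_dominates[OF \<open>e > 0\<close>] by blast
  define q where "q = prod_encode (m, k0)"
  define k where "k = 2 * q + 1"
  have "k0 \<le> k" using le_prod_encode_2[of k0 m] by (simp add: k_def q_def)
  then have growth: "real (fact k) + K \<le> e * (real (fact (Suc k)) - K)" "N + K \<le> (fact (Suc k) :: nat)"
    using k0 by blast+
  define L where "L = (fact k :: nat) + K"
  define n where "n = (fact (Suc k) :: nat)"
  have "x ((\<phi> ^^ i) \<gamma>0) \<noteq> y ((\<phi> ^^ i) \<gamma>0)" if i: "L \<le> i" "i < n" for i
  proof -
    have "(\<phi> ^^ i) \<gamma>0 \<in> \<Gamma> - G"
      using K funpow_in_funcset[OF maps_to \<gamma>0_in] i(1) by (auto simp: L_def)
    moreover have "i \<in> {fact (2*q+1)..<fact (Suc (2*q+1))}"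
      using i by (simp add: L_def n_def k_def)
    then have "coded_bit s i \<longleftrightarrow> s m" "coded_bit s' i \<longleftrightarrow> s' m"
      using coded_bit_odd_block by (simp_all add: q_def)
    ultimately show ?thesis using x y coded_point_orbit assms(4,5) by auto
  qed
  moreover have "real L \<le> e * real n"
  proof -
    have "real L \<le> e * (real (fact (Suc k)) - K)" using growth(1) by (simp add: L_def)
    also have "\<dots> \<le> e * real n" using \<open>e > 0\<close> by (simp add: n_def)
    finally show ?thesis .
  qed
  moreover have "N \<le> n" using growth(2) by (simp add: n_def)
  ultimately show ?thesis by blast
qed

end

section \<open>A dense uncountable scrambled set\<close>

lemma uncountable_UNIV_nat_bool: "uncountable (UNIV :: (nat \<Rightarrow> bool) set)"
proof
  assume "countable (UNIV :: (nat \<Rightarrow> bool) set)"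
  then obtain f :: "nat \<Rightarrow> nat \<Rightarrow> bool" where "range f = UNIV"
    by (metis uncountable_def UNIV_not_empty)
  then obtain n where "f n = (\<lambda>k. \<not> f k k)" by (metis UNIV_I imageE)
  then show False by metis
qed

definition finite_patches :: "'g set \<Rightarrow> 'a set \<Rightarrow> ('g set \<times> ('g \<Rightarrow> 'a)) set" where
  "finite_patches \<Gamma> X = Sigma {F. finite F \<and> F \<subseteq> \<Gamma>} (\<lambda>F. F \<rightarrow>\<^sub>E X)"

lemma countable_finite_patches:
  assumes "countable \<Gamma>" "finite X"
  shows "countable (finite_patches \<Gamma> X)"
  unfolding finite_patches_def
proof (rule countable_SIGMA)
  show "countable {F. finite F \<and> F \<subseteq> \<Gamma>}" using countable_Collect_finite_subset[OF assms(1)] .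
  show "countable (F \<rightarrow>\<^sub>E X)" if "F \<in> {F. finite F \<and> F \<subseteq> \<Gamma>}" for F
    using that assms(2) by (intro countable_finite finite_PiE) auto
qed

lemma finite_patches_nonempty: "finite_patches \<Gamma> X \<noteq> {}"
proof -
  have "({}, \<lambda>_. undefined) \<in> finite_patches \<Gamma> X" by (simp add: finite_patches_def)
  then show ?thesis by blast
qed

context orbit_coding
begin

text \<open>A parameter \<open>s\<close> selects both a coded point and, through its first true bit, the patch
  applied to it; the parameter \<open>\<lambda>k. k = n\<close> selects the \<open>n\<close>-th patch, which makes the family dense.\<close>

definition patch :: "'a set \<Rightarrow> (nat \<Rightarrow> bool) \<Rightarrow> 'g set \<times> ('g \<Rightarrow> 'a)" where
  "patch X s = from_nat_into (finite_patches \<Gamma> X) (LEAST k. s k)"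

definition patched_point :: "'a set \<Rightarrow> (nat \<Rightarrow> bool) \<Rightarrow> 'g \<Rightarrow> 'a" where
  "patched_point X s = override_on (coded_point s) (snd (patch X s)) (fst (patch X s))"

lemma patch_in_finite_patches: "patch X s \<in> finite_patches \<Gamma> X"
  unfolding patch_def using finite_patches_nonempty by (rule from_nat_into)

lemma patched_point_in:
  assumes "a \<in> X" "b \<in> X"
  shows "patched_point X s \<in> \<Gamma> \<rightarrow>\<^sub>E X"
  using patch_in_finite_patches[of X s] coded_point_in[OF assms, of s]
  by (fastforce simp: patched_point_def override_on_def finite_patches_def PiE_iff extensional_def)

lemma patched_point_off_patch:
  "\<beta> \<notin> fst (patch X s) \<Longrightarrow> patched_point X s \<beta> = coded_point s \<beta>"
  by (simp add: patched_point_def)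

lemma finite_patch: "finite (fst (patch X s))"
  using patch_in_finite_patches[of X s] by (auto simp: finite_patches_def)

lemma patch_surj:
  assumes "countable \<Gamma>" "finite X" "P \<in> finite_patches \<Gamma> X"
  shows "patch X (\<lambda>k. k = to_nat_on (finite_patches \<Gamma> X) P) = P"
proof -
  have "(LEAST k. k = to_nat_on (finite_patches \<Gamma> X) P) = to_nat_on (finite_patches \<Gamma> X) P"
    by (rule Least_equality) simp_all
  then show ?thesis
    using countable_finite_patches[OF assms(1,2)] assms(3) by (simp add: patch_def)
qed

lemma patched_points_dense:
  assumes "countable \<Gamma>" "finite X" "a \<in> X" "b \<in> X"
  shows "product_topology (\<lambda>_. discrete_topology X) \<Gamma> closure_of range (patched_point X)
    = topspace (product_topology (\<lambda>_. discrete_topology X) \<Gamma>)"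
  unfolding dense_intersects_open
proof (intro allI impI)
  fix U assume U: "openin (product_topology (\<lambda>_. discrete_topology X) \<Gamma>) U \<and> U \<noteq> {}"
  then obtain u where "u \<in> U" by blast
  with U obtain F where F: "finite F" "F \<subseteq> \<Gamma>" "cylinder \<Gamma> X F u \<subseteq> U"
    by (metis openin_product_discrete_contains_cylinder)
  have "u \<in> \<Gamma> \<rightarrow>\<^sub>E X" using U \<open>u \<in> U\<close> openin_subset by fastforce
  then have P: "(F, restrict u F) \<in> finite_patches \<Gamma> X"
    using F by (auto simp: finite_patches_def PiE_iff)
  define s where "s = (\<lambda>k. k = to_nat_on (finite_patches \<Gamma> X) (F, restrict u F))"
  have "patch X s = (F, restrict u F)" unfolding s_def by (rule patch_surj[OF assms(1,2) P])
  then have "patched_point X s \<in> cylinder \<Gamma> X F u"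
    using patched_point_in[OF assms(3,4), of s] by (simp add: cylinder_def patched_point_def)
  with F(3) show "range (patched_point X) \<inter> U \<noteq> {}" by blast
qed

lemma coded_points_scrambled:
  assumes "discrete_product_metric \<Gamma> X d"
    and xy: "x \<in> \<Gamma> \<rightarrow>\<^sub>E X" "y \<in> \<Gamma> \<rightarrow>\<^sub>E X" and "finite G"
    and x: "\<And>\<beta>. \<beta> \<in> \<Gamma> - G \<Longrightarrow> x \<beta> = coded_point s \<beta>"
    and y: "\<And>\<beta>. \<beta> \<in> \<Gamma> - G \<Longrightarrow> y \<beta> = coded_point s' \<beta>"
    and "s \<noteq> s'" "a \<noteq> b"
    and \<delta>: "\<And>u v. u \<in> \<Gamma> \<rightarrow>\<^sub>E X \<Longrightarrow> v \<in> \<Gamma> \<rightarrow>\<^sub>E X \<Longrightarrow> d u v < \<delta> \<Longrightarrow> u \<gamma>0 = v \<gamma>0"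
  shows "(\<forall>t>0. dc_F_upper d (sigma_phi \<Gamma> \<phi>) x y t = 1) \<and> dc_F_lower d (sigma_phi \<Gamma> \<phi>) x y \<delta> = 0"
proof -
  interpret discrete_product_metric \<Gamma> X d by fact
  let ?\<sigma> = "sigma_phi \<Gamma> \<phi>"
  have iterate_in: "(?\<sigma> ^^ i) x \<in> \<Gamma> \<rightarrow>\<^sub>E X" "(?\<sigma> ^^ i) y \<in> \<Gamma> \<rightarrow>\<^sub>E X" for i
    using funpow_sigma_phi_in[OF maps_to] xy by blast+
  have iterate_at: "(?\<sigma> ^^ i) x \<beta> = x ((\<phi> ^^ i) \<beta>)" "(?\<sigma> ^^ i) y \<beta> = y ((\<phi> ^^ i) \<beta>)"
    if "\<beta> \<in> \<Gamma>" for i \<beta>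
    using that funpow_sigma_phi[OF maps_to xy(1)] funpow_sigma_phi[OF maps_to xy(2)] by simp_all
  have "dc_F_upper d ?\<sigma> x y t = 1" if "t > 0" for t
  proof -
    obtain F where F: "finite F" "F \<subseteq> \<Gamma>"
      and close: "\<And>u v. u \<in> \<Gamma> \<rightarrow>\<^sub>E X \<Longrightarrow> v \<in> \<Gamma> \<rightarrow>\<^sub>E X \<Longrightarrow> \<forall>i\<in>F. u i = v i \<Longrightarrow> d u v < t"
      using agree_imp_dist_less[OF \<open>t > 0\<close>] by blast
    show ?thesis unfolding dc_F_upper_def dc_xi_def
    proof (rule limsup_card_ratio_eq_1)
      fix e :: real and N :: nat assume "e > 0"
      then obtain L n where Ln: "N \<le> n" "real L \<le> e * real n"
        and agree: "\<And>i. L \<le> i \<Longrightarrow> i < n \<Longrightarrow> \<forall>\<beta>\<in>F. x ((\<phi> ^^ i) \<beta>) = y ((\<phi> ^^ i) \<beta>)"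
        using agree_on_long_intervals[OF F \<open>finite G\<close> x y] by metis
      have "d ((?\<sigma> ^^ i) x) ((?\<sigma> ^^ i) y) < t" if "L \<le> i" "i < n" for i
        using close[OF iterate_in] agree[OF that] iterate_at F(2) by (simp add: subset_iff)
      with Ln show "\<exists>L n. N \<le> n \<and> real L \<le> e * real n \<and>
          (\<forall>i. L \<le> i \<longrightarrow> i < n \<longrightarrow> d ((?\<sigma> ^^ i) x) ((?\<sigma> ^^ i) y) < t)" by blast
    qed
  qed
  moreover have "dc_F_lower d ?\<sigma> x y \<delta> = 0"
    unfolding dc_F_lower_def dc_xi_def
  proof (rule liminf_card_ratio_eq_0)
    fix e :: real and N :: nat assume "e > 0"
    obtain m where "s m \<noteq> s' m" using \<open>s \<noteq> s'\<close> by blast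
    then obtain L n where Ln: "N \<le> n" "real L \<le> e * real n"
      and differ: "\<And>i. L \<le> i \<Longrightarrow> i < n \<Longrightarrow> x ((\<phi> ^^ i) \<gamma>0) \<noteq> y ((\<phi> ^^ i) \<gamma>0)"
      using differ_on_long_intervals[OF \<open>finite G\<close> x y _ \<open>a \<noteq> b\<close> \<open>e > 0\<close>] by metis
    have "\<not> d ((?\<sigma> ^^ i) x) ((?\<sigma> ^^ i) y) < \<delta>" if "L \<le> i" "i < n" for i
      using \<delta>[OF iterate_in] differ[OF that] iterate_at \<gamma>0_in by metis
    with Ln show "\<exists>L n. N \<le> n \<and> real L \<le> e * real n \<and>
        (\<forall>i. L \<le> i \<longrightarrow> i < n \<longrightarrow> \<not> d ((?\<sigma> ^^ i) x) ((?\<sigma> ^^ i) y) < \<delta>)" by blast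
  qed
  ultimately show ?thesis by blast
qed

lemma inj_patched_point:
  assumes "a \<noteq> b"
  shows "inj (patched_point X)"
proof (rule injI, rule ccontr)
  fix s s' assume eq: "patched_point X s = patched_point X s'" and "s \<noteq> s'"
  then obtain m where m: "s m \<noteq> s' m" by blast
  let ?G = "fst (patch X s) \<union> fst (patch X s')"
  have "finite ?G" using finite_patch by blast
  moreover have "patched_point X s \<beta> = coded_point s \<beta>" "patched_point X s' \<beta> = coded_point s' \<beta>"
    if "\<beta> \<in> \<Gamma> - ?G" for \<beta> using that by (simp_all add: patched_point_off_patch)
  ultimately obtain L n where "1 \<le> n" "real L \<le> 1/2 * real n"
    and "\<And>i. L \<le> i \<Longrightarrow> i < n \<Longrightarrow> patched_point X s ((\<phi> ^^ i) \<gamma>0) \<noteq> patched_point X s' ((\<phi> ^^ i) \<gamma>0)"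
    using differ_on_long_intervals[of ?G "patched_point X s" s "patched_point X s'" s' m "1/2" 1] m assms
    by auto
  moreover have "L < n" using \<open>1 \<le> n\<close> \<open>real L \<le> 1/2 * real n\<close> by linarith
  ultimately show False using eq by auto
qed

end

lemma (in aperiodic_map) dense_distributional_chaotic_sigma_phi:
  assumes "discrete_product_metric \<Gamma> X d" "card X \<ge> 2" "countable \<Gamma>" "\<Gamma> \<noteq> {}"
  shows "dense_distributional_chaotic (product_topology (\<lambda>_. discrete_topology X) \<Gamma>) d (sigma_phi \<Gamma> \<phi>)"
proof -
  interpret discrete_product_metric \<Gamma> X d by fact
  obtain a b where ab: "a \<in> X" "b \<in> X" "a \<noteq> b" using two_distinct_elements[OF assms(2)] .
  obtain \<gamma>0 where "\<gamma>0 \<in> \<Gamma>" using assms(4) by blast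
  then interpret orbit_coding \<Gamma> \<phi> \<gamma>0 a b by unfold_locales
  have "finite {\<gamma>0}" "{\<gamma>0} \<subseteq> \<Gamma>" using \<open>\<gamma>0 \<in> \<Gamma>\<close> by simp_all
  obtain \<delta> where "\<delta> > 0"
    and \<delta>: "\<And>u v. u \<in> \<Gamma> \<rightarrow>\<^sub>E X \<Longrightarrow> v \<in> \<Gamma> \<rightarrow>\<^sub>E X \<Longrightarrow> d u v < \<delta> \<Longrightarrow> \<forall>i\<in>{\<gamma>0}. u i = v i"
    using dist_less_imp_agree[OF \<open>finite {\<gamma>0}\<close> \<open>{\<gamma>0} \<subseteq> \<Gamma>\<close>] by blast
  let ?A = "range (patched_point X)"
  have "?A \<subseteq> \<Gamma> \<rightarrow>\<^sub>E X" using patched_point_in[OF ab(1,2)] by blast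
  moreover have "uncountable ?A"
    using inj_patched_point[OF ab(3)] uncountable_UNIV_nat_bool countable_image_inj_on by blast
  moreover have "(\<forall>t>0. dc_F_upper d (sigma_phi \<Gamma> \<phi>) x y t = 1) \<and> dc_F_lower d (sigma_phi \<Gamma> \<phi>) x y \<delta> = 0"
    if xy: "x \<in> ?A" "y \<in> ?A" "x \<noteq> y" for x y
  proof -
    obtain s s' where ss: "x = patched_point X s" "y = patched_point X s'" "s \<noteq> s'"
      using xy by blast
    show ?thesis unfolding ss(1,2)
    proof (rule coded_points_scrambled[OF assms(1) _ _ _ _ _ ss(3) ab(3)])
      let ?G = "fst (patch X s) \<union> fst (patch X s')"
      show "finite ?G" using finite_patch by blast
      show "patched_point X s \<beta> = coded_point s \<beta>" "patched_point X s' \<beta> = coded_point s' \<beta>"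
        if "\<beta> \<in> \<Gamma> - ?G" for \<beta> using that by (simp_all add: patched_point_off_patch)
      show "u \<gamma>0 = v \<gamma>0" if "u \<in> \<Gamma> \<rightarrow>\<^sub>E X" "v \<in> \<Gamma> \<rightarrow>\<^sub>E X" "d u v < \<delta>" for u v
        using \<delta>[OF that] by simp
    qed (use patched_point_in[OF ab(1,2)] in blast)+
  qed
  ultimately show ?thesis
    unfolding dense_distributional_chaotic_def
    using patched_points_dense[OF assms(3) finite_X ab(1,2)] \<open>\<delta> > 0\<close>
    by (intro exI[of _ ?A]) auto
qed

theorem theorem4p4:
  fixes X :: "'a set" and \<Gamma> :: "'g set" and \<phi> :: "'g \<Rightarrow> 'g"
    and d :: "('g \<Rightarrow> 'a) \<Rightarrow> ('g \<Rightarrow> 'a) \<Rightarrow> real"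
  assumes "finite X" and "card X \<ge> 2"
    and "countable \<Gamma>" and "\<Gamma> \<noteq> {}"
    and "\<phi> \<in> \<Gamma> \<rightarrow> \<Gamma>"
    and "Metric_space (topspace (product_topology (\<lambda>_. discrete_topology X) \<Gamma>)) d"
    and "Metric_space.mtopology (topspace (product_topology (\<lambda>_. discrete_topology X) \<Gamma>)) d
           = product_topology (\<lambda>_. discrete_topology X) \<Gamma>"
  shows "dense_distributional_chaotic (product_topology (\<lambda>_. discrete_topology X) \<Gamma>) d (sigma_phi \<Gamma> \<phi>)
         \<longleftrightarrow> \<not> (\<exists>\<alpha>\<in>\<Gamma>. \<exists>n>0. (\<phi> ^^ n) \<alpha> = \<alpha>)"
proof -
  have metric: "discrete_product_metric \<Gamma> X d"
    using assms(1,6,7) by (simp add: discrete_product_metric_def discrete_product_metric_axioms_def)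
  interpret discrete_product_metric \<Gamma> X d by (fact metric)
  show ?thesis
  proof
    assume "dense_distributional_chaotic (product_topology (\<lambda>_. discrete_topology X) \<Gamma>) d (sigma_phi \<Gamma> \<phi>)"
    then show "\<not> (\<exists>\<alpha>\<in>\<Gamma>. \<exists>n>0. (\<phi> ^^ n) \<alpha> = \<alpha>)"
      using not_dense_distributional_chaotic_if_periodic_point[OF assms(2,5)] by blast
  next
    assume "\<not> (\<exists>\<alpha>\<in>\<Gamma>. \<exists>n>0. (\<phi> ^^ n) \<alpha> = \<alpha>)"
    with assms(5) interpret aperiodic_map \<Gamma> \<phi> by unfold_locales
    show "dense_distributional_chaotic (product_topology (\<lambda>_. discrete_topology X) \<Gamma>) d (sigma_phi \<Gamma> \<phi>)"
      by (rule dense_distributional_chaotic_sigma_phi[OF metric assms(2-4)])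
  qed
qed

end
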